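(* Let $n\ge 2$ and let $Q_n$ be the graph defined below. For all $i\neq j$ in $\{1,\dots,n\}$, the graph $\sigma^{ij}_{\bowtie}(Q_n)$ is not a trapezoid graph.
   Context: $Q_n$ has $5n$ nodes $v_1,\dots,v_{5n}$, the edges $\{v_t,v_{t+1}\}$ for $1\le t<5n$ (a path), and additionally the edges $\{v_{5i-3},v_{5i-1}\}$ for each $i\in\{1,\dots,n\}$. For $i\in\{1,\dots,n\}$, $H_i$ is the subgraph with vertices $v_{5i-2},v_{5i-1}$ and the edge between them, and $\sigma_i: V(H_1)\to V(H_i)$ is the isomorphism $\sigma_i(v_3)=v_{5i-2}$, $\sigma_i(v_4)=v_{5i-1}$; $\sigma^{ij}=\sigma_i\circ\sigma_j^{-1}$. Crossing: given a graph $G$ and two independent isomorphic subgraphs $H=(V_1,E_1)$, $H'=(V_2,E_2)$ (disjoint vertex sets, no edges of $G$ between them) with isomorphism $\sigma:V_1\to V_2$, the crossing $\sigma_{\bowtie}(G)$ is obtained from $G$ by replacing every pair of edges $\{u,v\}\in E_1$, $\{\sigma(u),\sigma(v)\}\in E_2$ by the pair $\{u,\sigma(v)\}$, $\{\sigma(u),v\}$. Concretely, $\sigma^{ij}_{\bowtie}(Q_n)$ is obtained from $Q_n$ by removing the edges $\{v_{5i-2},v_{5i-1}\}$ and $\{v_{5j-2},v_{5j-1}\}$ and adding the edges $\{v_{5i-2},v_{5j-1}\}$ and $\{v_{5j-2},v_{5i-1}\}$. A trapezoid graph is the intersection graph of a family of trapezoids each having one side on a fixed top horizontal line and one side on a fixed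 parallel bottom line. *)

theory Defs
  imports "HOL-Analysis.Analysis"
begin

text \<open>Graphs are given by a vertex set V and a set E of 2-element vertex sets (edges).\<close>

definition is_trapezoid :: "(real \<times> real) set \<Rightarrow> bool" where
  "is_trapezoid S \<longleftrightarrow> (\<exists>a b c d. a \<le> b \<and> c \<le> d \<and>
      S = convex hull {(a, 1), (b, 1), (c, 0), (d, 0)})"

definition is_trapezoid_graph :: "'a set \<Rightarrow> 'a set set \<Rightarrow> bool" where
  "is_trapezoid_graph V E \<longleftrightarrow> (\<exists>T :: 'a \<Rightarrow> (real \<times> real) set.
      (\<forall>v\<in>V. is_trapezoid (T v)) \<and>
      (\<forall>u\<in>V. \<forall>v\<in>V. u \<noteq> v \<longrightarrow> ({u, v} \<in> E \<longleftrightarrow> T u \<inter> T v \<noteq> {})))"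

text \<open>The graph Q_n, vertex v_t represented by the natural number t.\<close>
definition Q_vertices :: "nat \<Rightarrow> nat set" where
  "Q_vertices n = {1..5*n}"

definition Q_edges :: "nat \<Rightarrow> nat set set" where
  "Q_edges n = {{t, t + 1} | t. 1 \<le> t \<and> t < 5*n}
             \<union> {{5*i - 3, 5*i - 1} | i. 1 \<le> i \<and> i \<le> n}"

definition H_edges :: "nat \<Rightarrow> nat set set" where
  "H_edges i = {{5*i - 2, 5*i - 1}}"

text \<open>sigma^{ij} = sigma_i o sigma_j^{-1} : V(H_j) -> V(H_i) (identity elsewhere, irrelevant).\<close>
definition sigma :: "nat \<Rightarrow> nat \<Rightarrow> nat \<Rightarrow> nat" where
  "sigma i j x = (if x = 5*j - 2 then 5*i - 2 else if x = 5*j - 1 then 5*i - 1 else x)"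

text \<open>Crossing of E along subgraph with edge set E1 and isomorphism s onto its copy:
every pair of edges {u,v} in E1, {s u, s v} replaced by {u, s v}, {s u, v}.\<close>
definition crossing :: "'a set set \<Rightarrow> 'a set set \<Rightarrow> ('a \<Rightarrow> 'a) \<Rightarrow> 'a set set" where
  "crossing E E1 s =
     (E - (E1 \<union> (\<lambda>e. s ` e) ` E1)) \<union> {{u, s v} | u v. {u, v} \<in> E1 \<and> u \<noteq> v}"

end

theory Submission
  imports Defs
begin

text \<open>
  A trapezoid graph is the incomparability graph of the strict partial order "lies strictly to
  the left of" on its trapezoids: two trapezoids are disjoint exactly when one of them is left of
  the other on both lines. An incomparability graph has no chordless cycle of length at least 5:
  the orientation of the comparable pair \<open>(w l, w (l + 2))\<close> propagates along the cycle and,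
  after going around twice, would make a vertex lie left of itself.
  In the crossed graph, for \<open>i < j\<close>, the new edge between \<open>v(5i - 1)\<close> and \<open>v(5j - 2)\<close> closes
  such a cycle of length \<open>4(j - i) + 1\<close>: it follows the path from \<open>v(5i - 1)\<close> to
  \<open>v(5j - 2)\<close>, bypassing each \<open>v(5k - 2)\<close> in between by the chord \<open>{v(5k - 3), v(5k - 1)}\<close>.
\<close>

section \<open>Incomparability graphs\<close>

definition is_incomparability_graph :: "('a \<Rightarrow> 'a \<Rightarrow> bool) \<Rightarrow> 'a set \<Rightarrow> 'a set set \<Rightarrow> bool" where
  "is_incomparability_graph R V E \<longleftrightarrow>
     (\<forall>x\<in>V. \<not> R x x) \<and>
     (\<forall>x\<in>V. \<forall>y\<in>V. \<forall>z\<in>V. R x y \<longrightarrow> R y z \<longrightarrow> R x z) \<and>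
     (\<forall>u\<in>V. \<forall>v\<in>V. u \<noteq> v \<longrightarrow> ({u, v} \<in> E \<longleftrightarrow> \<not> R u v \<and> \<not> R v u))"

lemma is_incomparability_graphD:
  assumes "is_incomparability_graph R V E"
  shows is_incomparability_graph_irrefl: "x \<in> V \<Longrightarrow> \<not> R x x"
    and is_incomparability_graph_trans: "x \<in> V \<Longrightarrow> y \<in> V \<Longrightarrow> z \<in> V \<Longrightarrow> R x y \<Longrightarrow> R y z \<Longrightarrow> R x z"
    and is_incomparability_graph_edge_iff:
      "u \<in> V \<Longrightarrow> v \<in> V \<Longrightarrow> u \<noteq> v \<Longrightarrow> {u, v} \<in> E \<longleftrightarrow> \<not> R u v \<and> \<not> R v u"
  using assms unfolding is_incomparability_graph_def by metis+

lemma is_incomparability_graph_converse: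
  "is_incomparability_graph R V E \<Longrightarrow> is_incomparability_graph (\<lambda>x y. R y x) V E"
  unfolding is_incomparability_graph_def by (elim conjE; intro conjI; metis)

lemma incomparability_graph_orientation_propagates:
  fixes w :: "nat \<Rightarrow> 'a"
  assumes G: "is_incomparability_graph R V E"
    and walk: "\<And>l. w l \<in> V"
    and steps: "\<And>l s. s \<in> {1, 2, 3} \<Longrightarrow> w l \<noteq> w (l + s) \<and> ({w l, w (l + s)} \<in> E \<longleftrightarrow> s = 1)"
    and start: "R (w 0) (w 2)"
  shows "R (w l) (w (l + 2))"
proof -
  note trans = is_incomparability_graph_trans[OF G walk walk walk]
  have incomparable: "\<not> R (w l) (w (l + 1)) \<and> \<not> R (w (l + 1)) (w l)" for l
    using is_incomparability_graph_edge_iff[OF G walk[of l] walk[of "l + 1"]] steps[of 1 l] by simp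
  have comparable: "R (w l) (w (l + s)) \<or> R (w (l + s)) (w l)" if "s \<in> {2, 3}" for l s
    using is_incomparability_graph_edge_iff[OF G walk[of l] walk[of "l + s"]] steps[of s l] that by auto
  show ?thesis
  proof (induction l)
    case 0
    show ?case using start by (simp add: numeral_2_eq_2)
  next
    case (Suc l)
    \<comment> \<open>\<open>w (l + 3)\<close> is not below \<open>w l\<close>: it would then be below its neighbour \<open>w (l + 2)\<close>.\<close>
    have "R (w l) (w (l + 3))"
    proof (rule ccontr)
      assume "\<not> R (w l) (w (l + 3))"
      then have "R (w (l + 3)) (w (l + 2))"
        using comparable[of 3 l] trans[OF _ Suc.IH] by blast
      then show False
        using incomparable[of "l + 2"] by (simp add: eval_nat_numeral)
    qed
    \<comment> \<open>\<open>w (l + 3)\<close> is not below \<open>w (l + 1)\<close>: then \<open>w l\<close> would be below its neighbour \<open>w (l + 1)\<close>.\<close>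
    show ?case
    proof (rule ccontr)
      assume "\<not> R (w (Suc l)) (w (Suc l + 2))"
      then have "R (w (l + 3)) (w (l + 1))"
        using comparable[of 2 "Suc l"] by (simp add: eval_nat_numeral)
      then have "R (w l) (w (l + 1))"
        using trans \<open>R (w l) (w (l + 3))\<close> by blast
      then show False
        using incomparable[of l] by blast
    qed
  qed
qed

lemma incomparability_graph_no_long_chordless_cycle:
  fixes w :: "nat \<Rightarrow> 'a"
  assumes G: "is_incomparability_graph R V E"
    and period: "0 < m" "\<And>l. w (l + m) = w l"
    and walk: "\<And>l. w l \<in> V"
    and steps: "\<And>l s. s \<in> {1, 2, 3} \<Longrightarrow> w l \<noteq> w (l + s) \<and> ({w l, w (l + s)} \<in> E \<longleftrightarrow> s = 1)"
  shows False
proof -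
  have no_ascent: "\<not> R' (w 0) (w 2)" if G': "is_incomparability_graph R' V E" for R'
  proof
    assume "R' (w 0) (w 2)"
    then have up: "R' (w l) (w (l + 2))" for l
      using incomparability_graph_orientation_propagates[where w = w, OF G' walk steps] by blast
    have chain: "R' (w 0) (w (2 * Suc k))" for k
    proof (induction k)
      case 0
      show ?case using up[of 0] by (simp add: numeral_2_eq_2)
    next
      case (Suc k)
      then show ?case
        using is_incomparability_graph_trans[OF G' walk walk walk Suc.IH up[of "2 * Suc k"]]
        by simp
    qed
    have "w (2 * m) = w 0"
      using period(2)[of 0] period(2)[of m] by (simp add: mult_2)
    then show False
      using chain[of "m - 1"] period(1) is_incomparability_graph_irrefl[OF G' walk] by simp
  qed
  have "R (w 0) (w 2) \<or> R (w 2) (w 0)"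
    using is_incomparability_graph_edge_iff[OF G walk[of 0] walk[of 2]] steps[of 2 0]
    by (simp add: numeral_2_eq_2)
  then show False
    using no_ascent[OF G] no_ascent[OF is_incomparability_graph_converse[OF G]] by blast
qed

section \<open>Trapezoid graphs are incomparability graphs\<close>

abbreviation trapezoid :: "real \<Rightarrow> real \<Rightarrow> real \<Rightarrow> real \<Rightarrow> (real \<times> real) set" where
  "trapezoid a b c d \<equiv> convex hull {(a, 1), (b, 1), (c, 0), (d, 0)}"

lemma trapezoids_disjoint_if_left:
  fixes a1 b1 c1 d1 a2 b2 c2 d2 :: real
  assumes "a1 \<le> b1" "c1 \<le> d1" "a2 \<le> b2" "c2 \<le> d2" "b1 < a2" "d1 < c2"
  shows "trapezoid a1 b1 c1 d1 \<inter> trapezoid a2 b2 c2 d2 = {}"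
proof -
  \<comment> \<open>The line through \<open>(b1, 1)\<close> and \<open>(d1, 0)\<close> separates the two trapezoids.\<close>
  let ?w = "(1, d1 - b1) :: real \<times> real"
  have "trapezoid a1 b1 c1 d1 \<subseteq> {p. inner ?w p \<le> d1}"
    using assms by (intro hull_minimal convex_halfspace_le) (auto simp: inner_prod_def)
  moreover have "trapezoid a2 b2 c2 d2 \<subseteq> {p. inner ?w p > d1}"
    using assms by (intro hull_minimal convex_halfspace_gt) (auto simp: inner_prod_def)
  ultimately show ?thesis by fastforce
qed

lemma horizontal_point_in_convex_hull:
  fixes S :: "(real \<times> real) set"
  assumes "(a, y) \<in> S" "(b, y) \<in> S" "a \<le> x" "x \<le> b"
  shows "(x, y) \<in> convex hull S"
proof -
  have "(x, y) \<in> closed_segment (a, y) (b, y)"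
    using assms by (simp add: closed_segment_same_snd closed_segment_eq_real_ivl1)
  then show ?thesis
    using closed_segment_subset_convex_hull[OF hull_inc[OF assms(1)] hull_inc[OF assms(2)]] by blast
qed

lemma trapezoids_meet_if_crossing:
  fixes a b c d e f g h :: real
  assumes "b < e" "h < c"
  shows "trapezoid a b c d \<inter> trapezoid e f g h \<noteq> {}"
proof -
  \<comment> \<open>The diagonals from \<open>(c, 0)\<close> to \<open>(b, 1)\<close> and from \<open>(h, 0)\<close> to \<open>(e, 1)\<close> cross at height \<open>t\<close>.\<close>
  define t where "t = (c - h) / ((c - h) + (e - b))"
  have t: "0 \<le> t" "t \<le> 1" using assms by (auto simp: t_def field_simps)
  have same_x: "(1 - t) * c + t * b = (1 - t) * h + t * e"
    using assms by (simp add: t_def field_simps)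
  have "((1 - t) * c + t * b, t) \<in> closed_segment (c, 0) (b, 1)"
    using t by (auto simp: in_segment intro!: exI[of _ t])
  moreover have "((1 - t) * c + t * b, t) \<in> closed_segment (h, 0) (e, 1)"
    using t same_x by (auto simp: in_segment intro!: exI[of _ t])
  moreover have "closed_segment (c, 0) (b, 1) \<subseteq> trapezoid a b c d"
    by (intro closed_segment_subset_convex_hull hull_inc) simp_all
  moreover have "closed_segment (h, 0) (e, 1) \<subseteq> trapezoid e f g h"
    by (intro closed_segment_subset_convex_hull hull_inc) simp_all
  ultimately show ?thesis by blast
qed

lemma trapezoids_disjoint_iff:
  fixes a1 b1 c1 d1 a2 b2 c2 d2 :: real
  assumes "a1 \<le> b1" "c1 \<le> d1" "a2 \<le> b2" "c2 \<le> d2"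
  shows "trapezoid a1 b1 c1 d1 \<inter> trapezoid a2 b2 c2 d2 = {} \<longleftrightarrow>
    (b1 < a2 \<and> d1 < c2) \<or> (b2 < a1 \<and> d2 < c1)"
proof
  assume disjoint: "trapezoid a1 b1 c1 d1 \<inter> trapezoid a2 b2 c2 d2 = {}"
  have no_common_top_point: "\<not> (a2 \<le> b1 \<and> a1 \<le> b2)"
  proof
    assume overlap: "a2 \<le> b1 \<and> a1 \<le> b2"
    have "(max a1 a2, 1) \<in> trapezoid a1 b1 c1 d1"
      by (rule horizontal_point_in_convex_hull[of a1 1 _ b1]) (use overlap assms in auto)
    moreover have "(max a1 a2, 1) \<in> trapezoid a2 b2 c2 d2"
      by (rule horizontal_point_in_convex_hull[of a2 1 _ b2]) (use overlap assms in auto)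
    ultimately show False using disjoint by blast
  qed
  have no_common_bottom_point: "\<not> (c2 \<le> d1 \<and> c1 \<le> d2)"
  proof
    assume overlap: "c2 \<le> d1 \<and> c1 \<le> d2"
    have "(max c1 c2, 0) \<in> trapezoid a1 b1 c1 d1"
      by (rule horizontal_point_in_convex_hull[of c1 0 _ d1]) (use overlap assms in auto)
    moreover have "(max c1 c2, 0) \<in> trapezoid a2 b2 c2 d2"
      by (rule horizontal_point_in_convex_hull[of c2 0 _ d2]) (use overlap assms in auto)
    ultimately show False using disjoint by blast
  qed
  have "\<not> (b1 < a2 \<and> d2 < c1)"
    using disjoint trapezoids_meet_if_crossing[of b1 a2 d2 c1 a1 d1 b2 c2] by blast
  moreover have "\<not> (b2 < a1 \<and> d1 < c2)"
    using disjoint trapezoids_meet_if_crossing[of b2 a1 d1 c2 a2 d2 b1 c1] by blast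
  ultimately show "(b1 < a2 \<and> d1 < c2) \<or> (b2 < a1 \<and> d2 < c1)"
    using no_common_top_point no_common_bottom_point by linarith
next
  assume "(b1 < a2 \<and> d1 < c2) \<or> (b2 < a1 \<and> d2 < c1)"
  then show "trapezoid a1 b1 c1 d1 \<inter> trapezoid a2 b2 c2 d2 = {}"
    using trapezoids_disjoint_if_left[OF assms] trapezoids_disjoint_if_left[OF assms(3,4,1,2)]
    by (auto simp: Int_commute)
qed

lemma is_trapezoid_corners:
  assumes "\<forall>v\<in>V. is_trapezoid (T v)"
  obtains A B C D :: "'a \<Rightarrow> real" where
    "\<And>v. v \<in> V \<Longrightarrow> A v \<le> B v" "\<And>v. v \<in> V \<Longrightarrow> C v \<le> D v"
    "\<And>v. v \<in> V \<Longrightarrow> T v = trapezoid (A v) (B v) (C v) (D v)"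
proof -
  have "\<forall>v\<in>V. \<exists>q. fst q \<le> fst (snd q) \<and> fst (snd (snd q)) \<le> snd (snd (snd q)) \<and>
      T v = trapezoid (fst q) (fst (snd q)) (fst (snd (snd q))) (snd (snd (snd q)))"
    using assms unfolding is_trapezoid_def by force
  then obtain q where "\<forall>v\<in>V. fst (q v) \<le> fst (snd (q v)) \<and>
      fst (snd (snd (q v))) \<le> snd (snd (snd (q v))) \<and>
      T v = trapezoid (fst (q v)) (fst (snd (q v))) (fst (snd (snd (q v)))) (snd (snd (snd (q v))))"
    by (rule bchoice[elim_format]) blast
  then show ?thesis
    by (intro that[of "\<lambda>v. fst (q v)" "\<lambda>v. fst (snd (q v))"
          "\<lambda>v. fst (snd (snd (q v)))" "\<lambda>v. snd (snd (snd (q v)))"]; blast)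
qed

lemma trapezoid_graph_imp_incomparability_graph:
  assumes "is_trapezoid_graph V E"
  shows "\<exists>R. is_incomparability_graph R V E"
proof -
  obtain T :: "'a \<Rightarrow> (real \<times> real) set" where
    trapezoids: "\<forall>v\<in>V. is_trapezoid (T v)" and
    edges: "\<forall>u\<in>V. \<forall>v\<in>V. u \<noteq> v \<longrightarrow> ({u, v} \<in> E \<longleftrightarrow> T u \<inter> T v \<noteq> {})"
    using assms unfolding is_trapezoid_graph_def by (elim exE conjE)
  obtain A B C D :: "'a \<Rightarrow> real" where
    sides: "\<And>v. v \<in> V \<Longrightarrow> A v \<le> B v" "\<And>v. v \<in> V \<Longrightarrow> C v \<le> D v" and
    shape: "\<And>v. v \<in> V \<Longrightarrow> T v = trapezoid (A v) (B v) (C v) (D v)"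
    using is_trapezoid_corners[OF trapezoids] by blast
  define R where "R x y \<longleftrightarrow> B x < A y \<and> D x < C y" for x y
  have "is_incomparability_graph R V E"
    unfolding is_incomparability_graph_def
  proof (intro conjI ballI impI)
    show "\<not> R x x" if "x \<in> V" for x
      using sides[OF that] unfolding R_def by linarith
    show "R x z" if "x \<in> V" "y \<in> V" "z \<in> V" "R x y" "R y z" for x y z
      using sides[OF that(2)] that(4,5) unfolding R_def by linarith
    show "{u, v} \<in> E \<longleftrightarrow> \<not> R u v \<and> \<not> R v u" if "u \<in> V" "v \<in> V" "u \<noteq> v" for u v
    proof -
      have "T u \<inter> T v = {} \<longleftrightarrow> R u v \<or> R v u"
        unfolding R_def shape[OF that(1)] shape[OF that(2)]
        by (rule trapezoids_disjoint_iff) (simp_all add: sides that)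
      then show ?thesis
        using edges that by blast
    qed
  qed
  then show ?thesis by blast
qed

section \<open>A long chordless cycle in the crossed graph\<close>

lemma crossing_single_edge:
  assumes "x \<noteq> y"
  shows "crossing E {{x, y}} s = (E - {{x, y}, {s x, s y}}) \<union> {{x, s y}, {y, s x}}"
proof -
  have "{{u, s v} | u v. {u, v} \<in> {{x, y}} \<and> u \<noteq> v} = {{x, s y}, {y, s x}}"
    using assms by (auto simp: doubleton_eq_iff)
  then show ?thesis by (simp add: crossing_def insert_commute)
qed

lemma crossing_H_edges:
  assumes "1 \<le> j"
  shows "crossing E (H_edges j) (sigma i j) =
     (E - {{5*i - 2, 5*i - 1}, {5*j - 2, 5*j - 1}}) \<union> {{5*j - 2, 5*i - 1}, {5*j - 1, 5*i - 2}}"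
proof -
  have "sigma i j (5*j - 2) = 5*i - 2" "sigma i j (5*j - 1) = 5*i - 1" "5*j - 2 \<noteq> 5*j - 1"
    using assms by (auto simp: sigma_def)
  then show ?thesis
    unfolding H_edges_def by (simp add: crossing_single_edge insert_commute)
qed

lemma crossing_H_edges_commute:
  assumes "1 \<le> i" "1 \<le> j"
  shows "crossing E (H_edges j) (sigma i j) = crossing E (H_edges i) (sigma j i)"
  using assms by (simp add: crossing_H_edges insert_commute)

lemma Q_edges_iff:
  "{u, v} \<in> Q_edges n \<longleftrightarrow>
     ((u = v + 1 \<or> v = u + 1) \<and> 1 \<le> min u v \<and> max u v \<le> 5*n) \<or>
     (\<exists>k. 1 \<le> k \<and> k \<le> n \<and> {u, v} = {5*k - 3, 5*k - 1})"
  by (auto simp: Q_edges_def doubleton_eq_iff)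

lemma Q_chord_iff:
  fixes u v :: nat
  assumes "u < 5*n" "v < 5*n"
  shows "(\<exists>k. 1 \<le> k \<and> k \<le> n \<and> {u, v} = {5*k - 3, 5*k - 1}) \<longleftrightarrow>
     (u mod 5 = 2 \<and> v = u + 2) \<or> (v mod 5 = 2 \<and> u = v + 2)"
proof
  assume "\<exists>k. 1 \<le> k \<and> k \<le> n \<and> {u, v} = {5*k - 3, 5*k - 1}"
  then obtain k where "1 \<le> k" "{u, v} = {5*k - 3, 5*k - 1}" by blast
  moreover have "5*k - 3 = 5*(k - 1) + 2" "5*k - 1 = 5*(k - 1) + 4"
    using \<open>1 \<le> k\<close> by simp_all
  ultimately obtain m where "{u, v} = {5*m + 2, 5*m + 4}" by auto
  moreover have "(5*m + 2) mod 5 = 2" by presburger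
  ultimately show "(u mod 5 = 2 \<and> v = u + 2) \<or> (v mod 5 = 2 \<and> u = v + 2)"
    by (auto simp: doubleton_eq_iff simp del: add_2_eq_Suc')
next
  assume "(u mod 5 = 2 \<and> v = u + 2) \<or> (v mod 5 = 2 \<and> u = v + 2)"
  then show "\<exists>k. 1 \<le> k \<and> k \<le> n \<and> {u, v} = {5*k - 3, 5*k - 1}"
  proof
    assume chord: "u mod 5 = 2 \<and> v = u + 2"
    then have "u = 5*(u div 5 + 1) - 3" "v = 5*(u div 5 + 1) - 1" by presburger+
    with assms show ?thesis by (intro exI[of _ "u div 5 + 1"]) auto
  next
    assume chord: "v mod 5 = 2 \<and> u = v + 2"
    then have "v = 5*(v div 5 + 1) - 3" "u = 5*(v div 5 + 1) - 1" by presburger+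
    with assms show ?thesis by (intro exI[of _ "v div 5 + 1"]) auto
  qed
qed

text \<open>
  With zero-based indices \<open>a = i - 1 < b = j - 1\<close>, on the window \<open>{5a + 4..5b + 3}\<close> the
  crossed graph consists of the path edges, the chords \<open>{5k + 2, 5k + 4}\<close> and the crossing edge
  \<open>{5a + 4, 5b + 3}\<close>.
\<close>

definition window_edge :: "nat \<Rightarrow> nat \<Rightarrow> nat \<Rightarrow> nat \<Rightarrow> bool" where
  "window_edge a b u v \<longleftrightarrow> u = v + 1 \<or> v = u + 1 \<or> (u mod 5 = 2 \<and> v = u + 2) \<or>
     (v mod 5 = 2 \<and> u = v + 2) \<or> {u, v} = {5*a + 4, 5*b + 3}"

lemma crossing_edge_in_window_iff:
  assumes "a < b" "b < n" "u \<in> {5*a + 4..5*b + 3}" "v \<in> {5*a + 4..5*b + 3}"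
  shows "{u, v} \<in> crossing (Q_edges n) (H_edges (Suc b)) (sigma (Suc a) (Suc b)) \<longleftrightarrow>
    window_edge a b u v"
proof -
  have crossed: "crossing (Q_edges n) (H_edges (Suc b)) (sigma (Suc a) (Suc b)) =
      (Q_edges n - {{5*a + 3, 5*a + 4}, {5*b + 3, 5*b + 4}}) \<union>
      {{5*b + 3, 5*a + 4}, {5*b + 4, 5*a + 3}}"
    by (simp add: crossing_H_edges add.commute)
  have Q: "{u, v} \<in> Q_edges n \<longleftrightarrow>
      u = v + 1 \<or> v = u + 1 \<or> (u mod 5 = 2 \<and> v = u + 2) \<or> (v mod 5 = 2 \<and> u = v + 2)"
    using assms Q_chord_iff[of u n v] unfolding Q_edges_iff by auto
  \<comment> \<open>The window contains neither \<open>5*a + 3\<close> nor \<open>5*b + 4\<close>.\<close>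
  have "{u, v} \<notin> {{5*a + 3, 5*a + 4}, {5*b + 3, 5*b + 4}, {5*b + 4, 5*a + 3}}"
    using assms by (auto simp: doubleton_eq_iff)
  then have "{u, v} \<in> crossing (Q_edges n) (H_edges (Suc b)) (sigma (Suc a) (Suc b)) \<longleftrightarrow>
      {u, v} \<in> Q_edges n \<or> {u, v} = {5*b + 3, 5*a + 4}"
    unfolding crossed by blast
  then show ?thesis
    unfolding Q window_edge_def by (auto simp: insert_commute)
qed

text \<open>
  The chordless cycle \<open>5a + 4, 5a + 5, 5a + 6, 5a + 7, 5a + 9, \<dots>, 5b + 2, 5b + 3\<close>: blocks of four
  consecutive vertices, each block ending on the chord that jumps over the next \<open>5k + 3\<close>.
\<close>

definition cycle_vertex :: "nat \<Rightarrow> nat \<Rightarrow> nat \<Rightarrow> nat" where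
  "cycle_vertex a b q = (if q < 4*(b - a) then 5*a + 4 + 5*(q div 4) + q mod 4 else 5*b + 3)"

lemma cycle_vertex_in_window:
  assumes "a < b" "q \<le> 4*(b - a)"
  shows "cycle_vertex a b q \<in> {5*a + 4..5*b + 3}"
proof (cases "q < 4*(b - a)")
  case True
  then have "q div 4 < b - a" by auto
  then show ?thesis using True by (auto simp: cycle_vertex_def)
next
  case False
  then show ?thesis using assms by (auto simp: cycle_vertex_def)
qed

lemma cycle_vertex_block:
  assumes "r < 4" "4*k + r < 4*(b - a)"
  shows "cycle_vertex a b (4*k + r) = 5*(a + k) + 4 + r"
  using assms by (simp add: cycle_vertex_def)

lemma window_edge_inner_step:
  assumes "u = 5*k + 4 + r" "r < 4" "s \<in> {1, 2, 3}"
    and "v = (if r + s < 4 then u + s else u + s + 1)" "v \<le> 5*b + 2"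
  shows "u \<noteq> v \<and> (window_edge a b u v \<longleftrightarrow> s = 1)"
proof -
  have "r \<in> {0, 1, 2, 3}" using assms(2) by auto
  then show ?thesis
    using assms(1,3-5) by (auto simp: window_edge_def doubleton_eq_iff)
qed

lemma window_edge_step_to_last:
  assumes "u + s = 5*b + 3" "s \<in> {1, 2, 3}" "a < b"
  shows "u \<noteq> 5*b + 3 \<and> (window_edge a b u (5*b + 3) \<longleftrightarrow> s = 1)"
  using assms by (auto simp: window_edge_def doubleton_eq_iff)

lemma window_edge_step_from_last:
  assumes "v = 5*a + 4 + (s - 1)" "s \<in> {1, 2, 3}" "a < b"
  shows "5*b + 3 \<noteq> v \<and> (window_edge a b (5*b + 3) v \<longleftrightarrow> s = 1)"
proof -
  obtain e where "b = Suc (a + e)" using assms(3) less_imp_Suc_add by blast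
  then show ?thesis
    using assms(1,2) by (auto simp: window_edge_def doubleton_eq_iff)
qed

lemma window_edge_wrap_step:
  assumes "u = 5*b - 1 + r" "v = 5*a + 4 + (r + s - 5)" "r < 4" "5 \<le> r + s" "s \<le> 3" "a < b"
  shows "u \<noteq> v \<and> (window_edge a b u v \<longleftrightarrow> s = 1)"
proof -
  have "(r = 2 \<and> s = 3) \<or> (r = 3 \<and> s = 2) \<or> (r = 3 \<and> s = 3)" using assms(3-5) by auto
  moreover obtain e where "b = Suc (a + e)" using assms(6) less_imp_Suc_add by blast
  ultimately show ?thesis
    using assms(1,2) by (auto simp: window_edge_def doubleton_eq_iff)
qed

lemma cycle_vertex_step_inside:
  assumes "q + s < 4*(b - a)" "s \<in> {1, 2, 3}"
  shows "cycle_vertex a b q \<noteq> cycle_vertex a b (q + s) \<and>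
    (window_edge a b (cycle_vertex a b q) (cycle_vertex a b (q + s)) \<longleftrightarrow> s = 1)"
proof -
  define k r where "k = q div 4" and "r = q mod 4"
  have q: "q = 4*k + r" "r < 4" by (simp_all add: k_def r_def)
  have u: "cycle_vertex a b q = 5*(a + k) + 4 + r"
    using q assms(1) by (intro cycle_vertex_block[of r k b a, folded q(1)]) simp_all
  have "cycle_vertex a b (q + s) =
      (if r + s < 4 then cycle_vertex a b q + s else cycle_vertex a b q + s + 1)"
  proof (cases "r + s < 4")
    case True
    have sum: "q + s = 4*k + (r + s)" using q by simp
    have "cycle_vertex a b (q + s) = 5*(a + k) + 4 + (r + s)"
      unfolding sum by (rule cycle_vertex_block) (use True assms(1) sum in simp_all)
    then show ?thesis using True u by simp
  next
    case False
    have sum: "q + s = 4*(k + 1) + (r + s - 4)" using q assms(2) False by simp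
    have "cycle_vertex a b (q + s) = 5*(a + (k + 1)) + 4 + (r + s - 4)"
      unfolding sum by (rule cycle_vertex_block) (use q assms sum in auto)
    then show ?thesis using False u by simp
  qed
  moreover have "cycle_vertex a b (q + s) \<le> 5*b + 2"
  proof -
    have "(q + s) div 4 + 1 \<le> b - a" "(q + s) mod 4 < 4" using assms(1) by auto
    then show ?thesis using assms(1) by (simp add: cycle_vertex_def)
  qed
  ultimately show ?thesis
    using window_edge_inner_step[OF u q(2) assms(2)] by simp
qed

lemma cycle_vertex_step_to_last:
  assumes "a < b" "q < 4*(b - a)" "q + s = 4*(b - a)" "s \<in> {1, 2, 3}"
  shows "cycle_vertex a b q \<noteq> 5*b + 3 \<and>
    (window_edge a b (cycle_vertex a b q) (5*b + 3) \<longleftrightarrow> s = 1)"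
proof -
  define d where "d = b - a"
  define k r where "k = q div 4" and "r = q mod 4"
  have q: "q = 4*k + r" "r < 4" by (simp_all add: k_def r_def)
  moreover have "1 \<le> s" "s \<le> 3" using assms(4) by auto
  moreover have "4*k + r + s = 4*d" using q assms(3) by (simp add: d_def)
  ultimately have "k + 1 = d" "r + s = 4"
    by presburger+
  moreover have "cycle_vertex a b q = 5*(a + k) + 4 + r"
    using q assms(2) by (intro cycle_vertex_block[of r k b a, folded q(1)]) simp_all
  ultimately have "cycle_vertex a b q + s = 5*b + 3"
    using assms(1) by (simp add: d_def)
  then show ?thesis
    by (rule window_edge_step_to_last[OF _ assms(4,1)])
qed

lemma cycle_vertex_step_around:
  assumes "a < b" "q < 4*(b - a)" "4*(b - a) < q + s" "s \<in> {1, 2, 3}"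
  shows "cycle_vertex a b q \<noteq> cycle_vertex a b (q + s - (4*(b - a) + 1)) \<and>
    (window_edge a b (cycle_vertex a b q) (cycle_vertex a b (q + s - (4*(b - a) + 1))) \<longleftrightarrow> s = 1)"
proof -
  define d where "d = b - a"
  define k r where "k = q div 4" and "r = q mod 4"
  have q: "q = 4*k + r" "r < 4" by (simp_all add: k_def r_def)
  have s: "1 \<le> s" "s \<le> 3" using assms(4) by auto
  moreover have "4*k + r < 4*d" "4*d < 4*k + r + s" using q assms(2,3) by (simp_all add: d_def)
  ultimately have "k + 1 = d" "5 \<le> r + s"
    using q(2) by presburger+
  then have "q + s - (4*(b - a) + 1) = r + s - 5"
    using q by (simp add: d_def)
  moreover have "r + s - 5 < 4" "r + s - 5 < 4*(b - a)"
    using q(2) assms(1,4) by auto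
  then have "cycle_vertex a b (r + s - 5) = 5*a + 4 + (r + s - 5)"
    by (simp add: cycle_vertex_def)
  moreover have "cycle_vertex a b q = 5*b - 1 + r"
    using q assms(2) \<open>k + 1 = d\<close> by (simp add: cycle_vertex_def d_def)
  ultimately show ?thesis
    using window_edge_wrap_step[OF refl refl q(2) \<open>5 \<le> r + s\<close> s(2) assms(1)] by simp
qed

lemma cycle_vertex_step_from_last:
  assumes "a < b" "s \<in> {1, 2, 3}"
  shows "cycle_vertex a b (4*(b - a)) \<noteq> cycle_vertex a b (s - 1) \<and>
    (window_edge a b (cycle_vertex a b (4*(b - a))) (cycle_vertex a b (s - 1)) \<longleftrightarrow> s = 1)"
proof -
  have "cycle_vertex a b (4*(b - a)) = 5*b + 3" "cycle_vertex a b (s - 1) = 5*a + 4 + (s - 1)"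
    using assms by (auto simp: cycle_vertex_def)
  then show ?thesis
    using window_edge_step_from_last[OF _ assms(2,1)] by simp
qed

lemma cycle_vertex_step:
  fixes a b q s :: nat
  defines "M \<equiv> 4*(b - a) + 1"
  assumes "a < b" "q < M" "s \<in> {1, 2, 3}"
  shows "cycle_vertex a b q \<noteq> cycle_vertex a b ((q + s) mod M) \<and>
    (window_edge a b (cycle_vertex a b q) (cycle_vertex a b ((q + s) mod M)) \<longleftrightarrow> s = 1)"
proof -
  have s: "1 \<le> s" "s \<le> 3" using assms(4) by auto
  consider "q = 4*(b - a)" | "q + s < 4*(b - a)" | "q < 4*(b - a)" "q + s = 4*(b - a)"
    | "q < 4*(b - a)" "4*(b - a) < q + s"
    using assms(3) unfolding M_def by linarith
  then show ?thesis
  proof cases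
    case 1
    then have "(q + s) mod M = s - 1"
      using s assms(2) by (simp add: M_def mod_if)
    then show ?thesis
      using 1 cycle_vertex_step_from_last[OF assms(2,4)] by simp
  next
    case 2
    then have "(q + s) mod M = q + s" by (simp add: M_def)
    then show ?thesis
      using cycle_vertex_step_inside[OF 2 assms(4)] by simp
  next
    case 3
    then have "cycle_vertex a b ((q + s) mod M) = 5*b + 3"
      by (simp add: M_def cycle_vertex_def)
    then show ?thesis
      using cycle_vertex_step_to_last[OF assms(2) 3 assms(4)] by simp
  next
    case 4
    then have "(q + s) mod M = q + s - M"
      using s by (simp add: M_def mod_if)
    then show ?thesis
      using cycle_vertex_step_around[OF assms(2) 4 assms(4)] by (simp add: M_def)
  qed
qed

lemma crossed_Q_not_trapezoid_graph:
  assumes "a < b" "b < n"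
  shows "\<not> is_trapezoid_graph {1..5*n}
    (crossing (Q_edges n) (H_edges (Suc b)) (sigma (Suc a) (Suc b)))" (is "\<not> is_trapezoid_graph ?V ?E")
proof
  assume "is_trapezoid_graph ?V ?E"
  then obtain R where G: "is_incomparability_graph R ?V ?E"
    using trapezoid_graph_imp_incomparability_graph by blast
  define M where "M = 4*(b - a) + 1"
  define w where "w l = cycle_vertex a b (l mod M)" for l
  have M: "0 < M" by (simp add: M_def)
  have window: "w l \<in> {5*a + 4..5*b + 3}" for l
    using cycle_vertex_in_window[OF assms(1), of "l mod M"] M by (simp add: w_def M_def)
  show False
  proof (rule incomparability_graph_no_long_chordless_cycle[OF G M])
    show "w (l + M) = w l" for l
      by (simp add: w_def)
    show "w l \<in> ?V" for l
      using window[of l] assms(2) by auto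
    show "w l \<noteq> w (l + s) \<and> ({w l, w (l + s)} \<in> ?E \<longleftrightarrow> s = 1)" if "s \<in> {1, 2, 3}" for l s
    proof -
      have "w (l + s) = cycle_vertex a b ((l mod M + s) mod M)"
        by (simp add: w_def mod_add_left_eq)
      then have "w l \<noteq> w (l + s) \<and> (window_edge a b (w l) (w (l + s)) \<longleftrightarrow> s = 1)"
        using cycle_vertex_step[OF assms(1) _ that] M by (simp add: w_def M_def)
      then show ?thesis
        using crossing_edge_in_window_iff[OF assms window window] by simp
    qed
  qed
qed

theorem mainTheorem12:
  fixes n i j :: nat
  assumes "n \<ge> 2" and "i \<in> {1..n}" and "j \<in> {1..n}" and "i \<noteq> j"
  shows "\<not> is_trapezoid_graph (Q_vertices n) (crossing (Q_edges n) (H_edges j) (sigma i j))"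
proof -
  have ordered:
    "\<not> is_trapezoid_graph (Q_vertices n) (crossing (Q_edges n) (H_edges j') (sigma i' j'))"
    if "i' < j'" "1 \<le> i'" "j' \<le> n" for i' j'
    using crossed_Q_not_trapezoid_graph[of "i' - 1" "j' - 1" n] that
    by (simp add: Q_vertices_def)
  show ?thesis
  proof (cases "i < j")
    case True
    then show ?thesis using ordered assms(2,3) by simp
  next
    case False
    then have "j < i" using assms(4) by simp
    then show ?thesis
      using ordered[of j i] assms(2,3) crossing_H_edges_commute[of i j] by simp
  qed
qed

end
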